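(* Let $W$ be a real symmetric $n\times n$ matrix with non-negative entries $w_{i,j}$ and zero diagonal, let $\lambda\ge 0$, and let $z\in\mathbb{C}^n$. If $$\lambda\,\Bigl(\max_{i}\sum_{j\neq i} w_{i,j}\Bigr) < 1,$$ then the function $x\mapsto D_{\lambda,W}(x;z)$ is strictly convex on $\mathbb{C}^n$ (viewed as $\mathbb{R}^{2n}$). In particular, it has a unique minimizer.
   Context: For $x\in\mathbb{C}^n$, $|x|$ denotes the vector of magnitudes $(|x_1|,\dots,|x_n|)$ and $\|x\|_1=\sum_i |x_i|$. The penalty is $P_W(x)=\|x\|_1+\frac12\sum_{i,j} w_{i,j}|x_i x_j| = \|x\|_1+\frac12|x|^T W|x|$. For $\lambda\ge0$ and $z\in\mathbb{C}^n$, $D_{\lambda,W}(x;z)=\frac12\|z-x\|_2^2+\lambda P_W(x)$. $\mathbb{C}^n$ is identified with $\mathbb{R}^{2n}$, with inner product $\langle x,y\rangle=\sum_i \mathrm{Re}(x_i \overline{y_i})$. *)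

theory Defs
  imports "HOL-Analysis.Analysis"
begin

text \<open>Strict convexity of a real-valued function on a subset of a real vector space.
  Vectors in C^n are modelled as complex ^ 'n, which is a real vector space
  (isomorphic to R^(2n)).\<close>
definition strict_convex_on :: "'a::real_vector set \<Rightarrow> ('a \<Rightarrow> real) \<Rightarrow> bool" where
  "strict_convex_on S f \<longleftrightarrow>
     (\<forall>x\<in>S. \<forall>y\<in>S. x \<noteq> y \<longrightarrow> (\<forall>u::real. 0 < u \<longrightarrow> u < 1 \<longrightarrow>
        f ((1 - u) *\<^sub>R x + u *\<^sub>R y) < (1 - u) * f x + u * f y))"

definition penalty :: "real ^ 'n ^ 'n \<Rightarrow> complex ^ 'n \<Rightarrow> real" where
  "penalty W x = (\<Sum>i\<in>UNIV. cmod (x $ i))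
      + 1/2 * (\<Sum>i\<in>UNIV. \<Sum>j\<in>UNIV. W $ i $ j * cmod (x $ i * x $ j))"

definition Dfun :: "real \<Rightarrow> real ^ 'n ^ 'n \<Rightarrow> complex ^ 'n \<Rightarrow> complex ^ 'n \<Rightarrow> real" where
  "Dfun lam W z x = 1/2 * (\<Sum>i\<in>UNIV. (cmod (z $ i - x $ i))\<^sup>2) + lam * penalty W x"

end

theory Submission
  imports Defs
begin

text \<open>Since \<open>|x\<^sub>i x\<^sub>j| = ((|x\<^sub>i| + |x\<^sub>j|)\<^sup>2 - |x\<^sub>i|\<^sup>2 - |x\<^sub>j|\<^sup>2) / 2\<close> and \<open>W\<close> is symmetric,
  with row sums \<open>s\<^sub>i\<close> the objective splits as
  \<open>\<Sum>\<^sub>i (|z\<^sub>i - x\<^sub>i|\<^sup>2 - \<lambda> s\<^sub>i |x\<^sub>i|\<^sup>2) / 2  +  \<lambda> (\<parallel>x\<parallel>\<^sub>1 + \<Sum>\<^sub>i\<^sub>j w\<^sub>i\<^sub>j (|x\<^sub>i| + |x\<^sub>j|)\<^sup>2 / 4)\<close>.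
  The second part is convex: it is built from norms of coordinates by nonnegative combinations and
  by squaring nonnegative convex functions. The first part is strictly convex because
  \<open>\<lambda> s\<^sub>i < 1\<close>: its convexity gap between \<open>x\<close> and \<open>y\<close> at weight \<open>u\<close> is
  \<open>\<Sum>\<^sub>i u (1 - u) (1 - \<lambda> s\<^sub>i) |x\<^sub>i - y\<^sub>i|\<^sup>2 / 2\<close>.
  A minimizer exists since \<open>D(x) \<ge> |z - x|\<^sup>2 / 2 \<ge> D(0)\<close> outside the ball of radius \<open>|z|\<close>
  around \<open>z\<close>, and strict convexity makes it unique.\<close>

lemma power2_norm_vec:
  "(norm (x :: 'a::real_normed_vector ^ 'n))\<^sup>2 = (\<Sum>i\<in>UNIV. (norm (x $ i))\<^sup>2)"
  unfolding norm_vec_def L2_set_def by (simp add: sum_nonneg)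

lemma power2_norm_convex_combination:
  fixes a b :: "'a::real_inner"
  shows "(1 - u) * (norm a)\<^sup>2 + u * (norm b)\<^sup>2 - (norm ((1 - u) *\<^sub>R a + u *\<^sub>R b))\<^sup>2
      = u * (1 - u) * (norm (a - b))\<^sup>2"
  unfolding power2_norm_eq_inner by (simp add: inner_simps algebra_simps power2_eq_square)

lemma strict_convex_on_minimizer_unique:
  assumes f: "strict_convex_on S f" and S: "convex S" and "x \<in> S" "y \<in> S"
    and "\<forall>w\<in>S. f x \<le> f w" "\<forall>w\<in>S. f y \<le> f w"
  shows "x = y"
proof (rule ccontr)
  assume "x \<noteq> y"
  let ?m = "(1 - 1/2) *\<^sub>R x + (1/2::real) *\<^sub>R y"
  have "f ?m < (1 - 1/2) * f x + 1/2 * f y"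
    using f[unfolded strict_convex_on_def, rule_format, OF \<open>x \<in> S\<close> \<open>y \<in> S\<close> \<open>x \<noteq> y\<close>, of "1/2"]
    by simp
  moreover have "?m \<in> S"
    using convexD_alt[OF S \<open>x \<in> S\<close> \<open>y \<in> S\<close>, of "1/2"] by simp
  then have "f x \<le> f ?m" "f y \<le> f ?m"
    using assms(5,6) by blast+
  ultimately show False by simp
qed

lemma strict_convex_on_add_convex:
  assumes f: "strict_convex_on S f" and g: "convex_on S g"
  shows "strict_convex_on S (\<lambda>x. f x + g x)"
  unfolding strict_convex_on_def
proof (intro ballI allI impI)
  fix x y u
  assume "x \<in> S" "y \<in> S" "x \<noteq> y" "0 < (u::real)" "u < 1"
  then have "f ((1 - u) *\<^sub>R x + u *\<^sub>R y) < (1 - u) * f x + u * f y"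
    and "g ((1 - u) *\<^sub>R x + u *\<^sub>R y) \<le> (1 - u) * g x + u * g y"
    using f convex_onD[OF g, of u x y] unfolding strict_convex_on_def by auto
  then show "f ((1 - u) *\<^sub>R x + u *\<^sub>R y) + g ((1 - u) *\<^sub>R x + u *\<^sub>R y)
      < (1 - u) * (f x + g x) + u * (f y + g y)"
    by (simp add: algebra_simps)
qed

lemma continuous_attains_global_inf:
  fixes f :: "'a::topological_space \<Rightarrow> real"
  assumes "compact K" "continuous_on K f" "x0 \<in> K" "\<And>y. y \<notin> K \<Longrightarrow> f x0 \<le> f y"
  shows "\<exists>x. \<forall>y. f x \<le> f y"
proof -
  obtain x where "x \<in> K" "\<forall>y\<in>K. f x \<le> f y"
    using continuous_attains_inf[OF assms(1) _ assms(2)] assms(3) by blast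
  then show ?thesis
    using assms(3,4) by (metis order_trans)
qed

lemma convex_on_sum_fun:
  assumes "finite I" "convex S" "\<And>i. i \<in> I \<Longrightarrow> convex_on S (f i)"
  shows "convex_on S (\<lambda>x. \<Sum>i\<in>I. f i x)"
  using assms by (induction I rule: finite_induct) (auto simp: convex_on_const)

lemma convex_on_power2:
  assumes f: "convex_on S f" and nonneg: "\<And>x. x \<in> S \<Longrightarrow> 0 \<le> f x"
  shows "convex_on S (\<lambda>x. (f x)\<^sup>2)"
proof (rule convex_onI)
  fix t :: real and x y
  assume t: "0 < t" "t < 1" and xy: "x \<in> S" "y \<in> S"
  have "(f ((1 - t) *\<^sub>R x + t *\<^sub>R y))\<^sup>2 \<le> ((1 - t) * f x + t * f y)\<^sup>2"
    using t xy convex_onD[OF f, of t x y] convex_on_imp_convex[OF f]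
    by (intro power_mono nonneg) (auto simp: convex_alt)
  also have "\<dots> \<le> (1 - t) * (f x)\<^sup>2 + t * (f y)\<^sup>2"
    using convex_onD[OF convex_power2, of t "f x" "f y"] t by simp
  finally show "(f ((1 - t) *\<^sub>R x + t *\<^sub>R y))\<^sup>2 \<le> (1 - t) * (f x)\<^sup>2 + t * (f y)\<^sup>2" .
qed (rule convex_on_imp_convex[OF f])

lemma convex_on_norm_component:
  "convex_on UNIV (\<lambda>x :: 'a::real_normed_vector ^ 'n. norm (x $ i))"
proof (rule convex_onI)
  fix t :: real and x y :: "'a ^ 'n"
  assume "0 < t" "t < 1"
  then show "norm (((1 - t) *\<^sub>R x + t *\<^sub>R y) $ i) \<le> (1 - t) * norm (x $ i) + t * norm (y $ i)"
    using norm_triangle_ineq[of "(1 - t) *\<^sub>R x $ i" "t *\<^sub>R y $ i"] by simp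
qed simp

lemma strict_convex_on_quadratic:
  fixes z :: "'a::real_inner ^ 'n" and c :: "'n \<Rightarrow> real"
  assumes c: "\<And>i. c i < 1"
  shows "strict_convex_on UNIV
    (\<lambda>x. \<Sum>i\<in>UNIV. (norm (z $ i - x $ i))\<^sup>2 / 2 - c i / 2 * (norm (x $ i))\<^sup>2)"
proof -
  define q where "q w i = (norm (z $ i - w $ i))\<^sup>2 / 2 - c i / 2 * (norm (w $ i))\<^sup>2"
    for w :: "'a ^ 'n" and i
  have gap: "(1 - u) * q x i + u * q y i - q ((1 - u) *\<^sub>R x + u *\<^sub>R y) i
      = u * (1 - u) / 2 * (1 - c i) * (norm (x $ i - y $ i))\<^sup>2" for x y u i
  proof -
    define v where "v = (1 - u) *\<^sub>R x + u *\<^sub>R y"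
    have "z $ i - v $ i = (1 - u) *\<^sub>R (z $ i - x $ i) + u *\<^sub>R (z $ i - y $ i)"
      unfolding v_def by (simp add: algebra_simps)
    then have dist: "(1 - u) * (norm (z $ i - x $ i))\<^sup>2 + u * (norm (z $ i - y $ i))\<^sup>2
        - (norm (z $ i - v $ i))\<^sup>2 = u * (1 - u) * (norm (x $ i - y $ i))\<^sup>2"
      using power2_norm_convex_combination[of u "z $ i - x $ i" "z $ i - y $ i"]
      by (simp add: norm_minus_commute)
    have "v $ i = (1 - u) *\<^sub>R x $ i + u *\<^sub>R y $ i"
      unfolding v_def by simp
    then have norm: "(1 - u) * (norm (x $ i))\<^sup>2 + u * (norm (y $ i))\<^sup>2 - (norm (v $ i))\<^sup>2
        = u * (1 - u) * (norm (x $ i - y $ i))\<^sup>2"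
      using power2_norm_convex_combination[of u "x $ i" "y $ i"] by simp
    have "(1 - u) * q x i + u * q y i - q v i
      = ((1 - u) * (norm (z $ i - x $ i))\<^sup>2 + u * (norm (z $ i - y $ i))\<^sup>2
          - (norm (z $ i - v $ i))\<^sup>2) / 2
        - c i / 2 * ((1 - u) * (norm (x $ i))\<^sup>2 + u * (norm (y $ i))\<^sup>2 - (norm (v $ i))\<^sup>2)"
      unfolding q_def by (simp add: field_simps)
    also have "\<dots> = u * (1 - u) / 2 * (1 - c i) * (norm (x $ i - y $ i))\<^sup>2"
      unfolding dist norm by (simp add: field_simps)
    finally show ?thesis unfolding v_def .
  qed
  have "strict_convex_on UNIV (\<lambda>x. sum (q x) UNIV)"
    unfolding strict_convex_on_def
  proof (intro ballI allI impI)
    fix x y :: "'a ^ 'n" and u :: real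
    assume "x \<noteq> y" "0 < u" "u < 1"
    obtain k where "x $ k \<noteq> y $ k" using \<open>x \<noteq> y\<close> by (auto simp: vec_eq_iff)
    have "0 < (\<Sum>i\<in>UNIV. u * (1 - u) / 2 * (1 - c i) * (norm (x $ i - y $ i))\<^sup>2)"
    proof (rule sum_pos2[of UNIV k])
      show "0 < u * (1 - u) / 2 * (1 - c k) * (norm (x $ k - y $ k))\<^sup>2"
        using \<open>x $ k \<noteq> y $ k\<close> \<open>0 < u\<close> \<open>u < 1\<close> c[of k] by simp
      show "0 \<le> u * (1 - u) / 2 * (1 - c i) * (norm (x $ i - y $ i))\<^sup>2" for i
        using \<open>0 < u\<close> \<open>u < 1\<close> c[of i] by simp
    qed simp_all
    then show "sum (q ((1 - u) *\<^sub>R x + u *\<^sub>R y)) UNIV < (1 - u) * sum (q x) UNIV + u * sum (q y) UNIV"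
      unfolding gap[symmetric] by (simp add: sum_subtractf sum.distrib sum_distrib_left)
  qed
  then show ?thesis
    unfolding q_def .
qed

lemma sum_sum_mult_symmetric:
  fixes w :: "'i \<Rightarrow> 'i \<Rightarrow> real"
  assumes "finite I" and "\<And>i j. w i j = w j i"
  shows "(\<Sum>i\<in>I. \<Sum>j\<in>I. w i j * (a i * a j))
    = (\<Sum>i\<in>I. \<Sum>j\<in>I. w i j * (a i + a j)\<^sup>2) / 2 - (\<Sum>i\<in>I. (\<Sum>j\<in>I. w i j) * (a i)\<^sup>2)"
proof -
  have swap: "(\<Sum>i\<in>I. \<Sum>j\<in>I. w i j * (a j)\<^sup>2) = (\<Sum>i\<in>I. (\<Sum>j\<in>I. w i j) * (a i)\<^sup>2)"
    using assms by (subst sum.swap) (simp add: sum_distrib_right)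
  have "(\<Sum>i\<in>I. \<Sum>j\<in>I. w i j * (a i + a j)\<^sup>2)
      = (\<Sum>i\<in>I. \<Sum>j\<in>I. w i j * (a i)\<^sup>2) + (\<Sum>i\<in>I. \<Sum>j\<in>I. w i j * (a j)\<^sup>2)
        + 2 * (\<Sum>i\<in>I. \<Sum>j\<in>I. w i j * (a i * a j))"
    by (simp add: power2_sum algebra_simps sum.distrib sum_distrib_left)
  moreover have "(\<Sum>i\<in>I. \<Sum>j\<in>I. w i j * (a i)\<^sup>2) = (\<Sum>i\<in>I. (\<Sum>j\<in>I. w i j) * (a i)\<^sup>2)"
    by (simp add: sum_distrib_right)
  ultimately show ?thesis
    using swap by linarith
qed

lemma Dfun_eq_quadratic_plus_convex:
  fixes W :: "real ^ 'n ^ 'n"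
  assumes "\<forall>i j. W $ i $ j = W $ j $ i"
  shows "Dfun lam W z x =
    (\<Sum>i\<in>UNIV. (norm (z $ i - x $ i))\<^sup>2 / 2 - lam * (\<Sum>j\<in>UNIV. W $ i $ j) / 2 * (norm (x $ i))\<^sup>2)
    + lam * ((\<Sum>i\<in>UNIV. norm (x $ i))
      + (\<Sum>i\<in>UNIV. \<Sum>j\<in>UNIV. W $ i $ j * (norm (x $ i) + norm (x $ j))\<^sup>2) / 4)"
proof -
  define s where "s i = (\<Sum>j\<in>UNIV. W $ i $ j)" for i
  have penalty: "penalty W x = (\<Sum>i\<in>UNIV. norm (x $ i))
      + (\<Sum>i\<in>UNIV. \<Sum>j\<in>UNIV. W $ i $ j * (norm (x $ i) + norm (x $ j))\<^sup>2) / 4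
      - (\<Sum>i\<in>UNIV. s i * (norm (x $ i))\<^sup>2) / 2"
    using sum_sum_mult_symmetric[of UNIV "\<lambda>i j. W $ i $ j" "\<lambda>i. norm (x $ i)"] assms
    unfolding penalty_def norm_mult s_def by simp
  have quadratic: "(\<Sum>i\<in>UNIV. (norm (z $ i - x $ i))\<^sup>2 / 2 - lam * s i / 2 * (norm (x $ i))\<^sup>2)
      = (\<Sum>i\<in>UNIV. (norm (z $ i - x $ i))\<^sup>2) / 2 - lam * (\<Sum>i\<in>UNIV. s i * (norm (x $ i))\<^sup>2) / 2"
    by (simp add: sum_subtractf sum_divide_distrib[symmetric] sum_distrib_left[symmetric] mult.assoc)
  show ?thesis
    unfolding Dfun_def penalty s_def[symmetric] quadratic by (simp add: algebra_simps)
qed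

lemma Dfun_ge_half_power2_dist:
  assumes "\<forall>i j. 0 \<le> W $ i $ j" and "0 \<le> lam"
  shows "(norm (z - x))\<^sup>2 / 2 \<le> Dfun lam W z x"
proof -
  have "0 \<le> penalty W x"
    unfolding penalty_def using assms(1) by (intro add_nonneg_nonneg sum_nonneg mult_nonneg_nonneg) auto
  then show ?thesis
    unfolding Dfun_def power2_norm_vec using assms(2) by simp
qed

lemma Dfun_zero: "Dfun lam W z 0 = (norm z)\<^sup>2 / 2"
  unfolding Dfun_def penalty_def power2_norm_vec by simp

theorem proposition1:
  fixes W :: "real ^ 'n ^ 'n" and lam :: real and z :: "complex ^ 'n"
  assumes "\<forall>i j. W $ i $ j = W $ j $ i"
    and "\<forall>i j. 0 \<le> W $ i $ j"
    and "\<forall>i. W $ i $ i = 0"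
    and "0 \<le> lam"
    and "lam * Max (range (\<lambda>i. \<Sum>j\<in>UNIV - {i}. W $ i $ j)) < 1"
  shows "strict_convex_on UNIV (Dfun lam W z)
       \<and> (\<exists>!x. \<forall>y. Dfun lam W z x \<le> Dfun lam W z y)"
proof -
  have row_bound: "lam * (\<Sum>j\<in>UNIV. W $ i $ j) < 1" for i
  proof -
    have "(\<Sum>j\<in>UNIV. W $ i $ j) = (\<Sum>j\<in>UNIV - {i}. W $ i $ j)"
      using assms(3) by (simp add: sum.remove[of UNIV i])
    also have "\<dots> \<le> Max (range (\<lambda>i. \<Sum>j\<in>UNIV - {i}. W $ i $ j))"
      by (rule Max_ge) auto
    finally show ?thesis
      using mult_left_mono[OF _ assms(4)] assms(5) by (meson le_less_trans)
  qed
  have "convex_on UNIV (\<lambda>x. lam * ((\<Sum>i\<in>UNIV. norm (x $ i))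
      + (\<Sum>i\<in>UNIV. \<Sum>j\<in>UNIV. W $ i $ j * (norm (x $ i) + norm (x $ j))\<^sup>2) / 4))"
    using assms(2,4)
    by (intro convex_on_cmul convex_on_add convex_on_cdiv convex_on_sum_fun convex_on_power2
        convex_on_norm_component) auto
  then have strict: "strict_convex_on UNIV (Dfun lam W z)"
    unfolding Dfun_eq_quadratic_plus_convex[OF assms(1)]
    by (rule strict_convex_on_add_convex[OF strict_convex_on_quadratic[OF row_bound]])
  have "\<exists>x. \<forall>y. Dfun lam W z x \<le> Dfun lam W z y"
  proof (rule continuous_attains_global_inf[of "cball z (norm z)" _ 0])
    show "continuous_on (cball z (norm z)) (Dfun lam W z)"
      unfolding Dfun_def penalty_def by (intro continuous_intros)
    show "Dfun lam W z 0 \<le> Dfun lam W z y" if "y \<notin> cball z (norm z)" for y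
    proof -
      have "(norm z)\<^sup>2 \<le> (norm (z - y))\<^sup>2"
        using that by (simp add: dist_norm power_mono)
      then show ?thesis
        using Dfun_ge_half_power2_dist[OF assms(2,4), of z y] unfolding Dfun_zero by linarith
    qed
  qed auto
  then show ?thesis
    using strict strict_convex_on_minimizer_unique[OF strict convex_UNIV] by blast
qed

end
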